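(* Let $\alpha$ be an expanding algebraic number with primitive minimal polynomial $A(X)=a_nX^n+\dots+a_1X+a_0\in\mathbb{Z}[X]$. The $\mathbb{Z}$-module $\Lambda_{\alpha,0}=\mathbb{Z}[\alpha]\cap\alpha^{-1}\mathbb{Z}[\alpha^{-1}]$ is generated by $w_0=a_n$ and $w_i=\alpha w_{i-1}+a_{n-i}$ for $1\le i<n$.
   Context: Expanding: all roots of $A$ have modulus $>1$; primitive: the coefficients of $A$ have gcd 1. *)

theory Defs
  imports "HOL-Computational_Algebra.Computational_Algebra"
begin

definition int_poly_ring :: "complex \<Rightarrow> complex set" where
  "int_poly_ring \<alpha> = {poly (map_poly of_int p) \<alpha> | p :: int poly. True}"

definition Lambda0 :: "complex \<Rightarrow> complex set" where
  "Lambda0 \<alpha> = int_poly_ring \<alpha> \<inter> ((\<lambda>z. inverse \<alpha> * z) ` int_poly_ring (inverse \<alpha>))"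

fun wgen :: "int poly \<Rightarrow> complex \<Rightarrow> nat \<Rightarrow> complex" where
  "wgen A \<alpha> 0 = of_int (coeff A (degree A))"
| "wgen A \<alpha> (Suc i) = \<alpha> * wgen A \<alpha> i + of_int (coeff A (degree A - Suc i))"

definition int_span_w :: "int poly \<Rightarrow> complex \<Rightarrow> complex set" where
  "int_span_w A \<alpha> = {(\<Sum>i<degree A. of_int (c i) * wgen A \<alpha> i) | c :: nat \<Rightarrow> int. True}"

end

theory Submission
  imports Defs
begin

text \<open>
  Write \<lfloor>P / X^k\<rfloor> for the quotient \<open>poly_shift k P\<close>. An element x of both rings is
  P(\<alpha>) = \<alpha>^-k R(\<alpha>) with deg R < k; then X^k P - R vanishes at \<alpha>, hence is a multiple A S of
  the irreducible A, and x is the value of \<lfloor>A S / X^k\<rfloor> at \<alpha>. Conversely, as (A S)(\<alpha>) = 0,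
  that value equals -\<alpha>^-k (A S mod X^k)(\<alpha>) and so lies in both rings. Finally, these values
  are exactly the integer combinations of the w_i = \<lfloor>A / X^(n-i)\<rfloor>(\<alpha>).
\<close>

lemma map_poly_of_int_add:
  "map_poly of_int (p + q) = (map_poly of_int p + map_poly of_int q :: 'a::comm_ring_1 poly)"
  by (rule poly_eqI) (simp add: coeff_map_poly)

lemma map_poly_of_int_diff:
  "map_poly of_int (p - q) = (map_poly of_int p - map_poly of_int q :: 'a::comm_ring_1 poly)"
  by (rule poly_eqI) (simp add: coeff_map_poly)

lemma map_poly_of_int_uminus:
  "map_poly of_int (- p) = (- map_poly of_int p :: 'a::comm_ring_1 poly)"
  by (rule poly_eqI) (simp add: coeff_map_poly)

lemma map_poly_of_int_mult:
  "map_poly of_int (p * q) = (map_poly of_int p * map_poly of_int q :: 'a::comm_ring_1 poly)"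
  by (rule poly_eqI) (simp add: coeff_map_poly coeff_mult)

lemma map_poly_of_int_smult:
  "map_poly of_int (smult c p) = (smult (of_int c) (map_poly of_int p) :: 'a::comm_ring_1 poly)"
  by (rule poly_eqI) (simp add: coeff_map_poly)

lemma map_poly_of_int_sum:
  "map_poly of_int (\<Sum>i\<in>I. f i) = (\<Sum>i\<in>I. map_poly of_int (f i) :: 'a::comm_ring_1 poly)"
  by (rule poly_eqI) (simp add: coeff_map_poly coeff_sum)

lemma map_poly_of_int_reflect_poly:
  "map_poly of_int (reflect_poly p)
    = (reflect_poly (map_poly of_int p) :: 'a::{comm_ring_1,ring_char_0} poly)"
  by (rule poly_eqI) (simp add: coeff_map_poly coeff_reflect_poly degree_map_poly)

lemmas map_poly_of_int_simps =
  map_poly_of_int_add map_poly_of_int_diff map_poly_of_int_uminus map_poly_of_int_mult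
  map_poly_of_int_smult map_poly_of_int_sum map_poly_of_int_reflect_poly map_poly_monom map_poly_pCons

lemma poly_shift_add: "poly_shift k (p + q) = poly_shift k p + poly_shift k q"
  by (rule poly_eqI) (simp add: coeff_poly_shift)

lemma poly_shift_diff: "poly_shift k (p - q) = poly_shift k p - poly_shift k (q :: 'a::ab_group_add poly)"
  by (rule poly_eqI) (simp add: coeff_poly_shift)

lemma poly_shift_smult: "poly_shift k (smult c p) = smult c (poly_shift k p)"
  by (rule poly_eqI) (simp add: coeff_poly_shift)

lemma poly_shift_sum: "poly_shift k (\<Sum>i\<in>I. f i) = (\<Sum>i\<in>I. poly_shift k (f i))"
  by (rule poly_eqI) (simp add: coeff_poly_shift coeff_sum)

lemma poly_shift_Suc_pCons_0: "poly_shift (Suc k) (pCons 0 p) = poly_shift k p"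
  by (rule poly_eqI) (simp add: coeff_poly_shift)

lemma poly_shift_eq_pCons: "poly_shift k p = pCons (coeff p k) (poly_shift (Suc k) p)"
  by (rule poly_eqI) (simp add: coeff_poly_shift coeff_pCons split: nat.splits)

lemma poly_shift_degree: "poly_shift (degree p) p = [:lead_coeff p:]"
  by (rule poly_eqI) (auto simp: coeff_poly_shift coeff_pCons coeff_eq_0 split: nat.splits)

lemma poly_shift_eq_0: "degree p < k \<Longrightarrow> poly_shift k p = 0"
  by (rule poly_eqI) (simp add: coeff_poly_shift coeff_eq_0)

lemma poly_shift_monom_mult:
  "i \<le> k \<Longrightarrow> poly_shift k (monom c i * p) = smult c (poly_shift (k - i) p)"
  by (rule poly_eqI) (simp add: coeff_poly_shift coeff_monom_mult)

lemma monom_poly_shift_plus_poly_cutoff: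
  "monom 1 k * poly_shift k p + poly_cutoff k p = (p :: 'a::comm_semiring_1 poly)"
  by (rule poly_eqI) (simp add: coeff_poly_shift coeff_monom_mult coeff_poly_cutoff)

lemma degree_poly_cutoff_less: "k > 0 \<Longrightarrow> degree (poly_cutoff k p) < k"
  by (rule degree_lessI) (simp_all add: coeff_poly_cutoff)

lemma pseudo_dvd_by_min_degree_root_poly:
  fixes C E :: "int poly" and a :: "'a::comm_ring_1"
  assumes C: "C \<noteq> 0" "poly (map_poly of_int C) a = 0"
    and min: "\<And>D. D \<noteq> 0 \<Longrightarrow> poly (map_poly of_int D) a = 0 \<Longrightarrow> degree C \<le> degree D"
    and E: "poly (map_poly of_int E) a = 0"
  obtains c q where "c \<noteq> 0" "smult c E = C * q"
proof -
  obtain q r where qr: "pseudo_divmod E C = (q, r)" by (cases "pseudo_divmod E C")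
  define c where "c = lead_coeff C ^ (Suc (degree E) - degree C)"
  have eq: "smult c E = C * q + r" and r: "r = 0 \<or> degree r < degree C"
    using pseudo_divmod[OF C(1) qr] by (auto simp: c_def)
  have "map_poly of_int r
      = smult (of_int c) (map_poly of_int E) - map_poly of_int C * (map_poly of_int q :: 'a poly)"
    using arg_cong[OF eq, of "map_poly of_int :: int poly \<Rightarrow> 'a poly"]
    by (simp add: map_poly_of_int_simps)
  then have "poly (map_poly of_int r) a = 0" using C(2) E by simp
  then have "r = 0" using r min[of r] by fastforce
  moreover have "c \<noteq> 0" using C(1) by (simp add: c_def)
  ultimately show ?thesis using that eq by simp
qed

lemma irreducible_dvd_of_common_root:
  fixes A B :: "int poly" and a :: "'a::{comm_ring_1,ring_char_0}"
  assumes irred: "irreducible A"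
    and A: "poly (map_poly of_int A) a = 0" and B: "poly (map_poly of_int B) a = 0"
  shows "A dvd B"
proof -
  have nonconst: "degree D \<noteq> 0" if "D \<noteq> 0" "poly (map_poly of_int D) a = 0" for D :: "int poly"
  proof
    assume "degree D = 0"
    then obtain k where "D = [:k:]" by (rule degree_eq_zeroE)
    then show False using that by (simp add: map_poly_pCons)
  qed
  have "A \<noteq> 0" using irred by auto
  obtain C where C: "C \<noteq> 0" "poly (map_poly of_int C) a = 0"
    and min: "\<And>D. D \<noteq> 0 \<Longrightarrow> poly (map_poly of_int D) a = 0 \<Longrightarrow> degree C \<le> degree D"
    using ex_has_least_nat[of "\<lambda>D. D \<noteq> 0 \<and> poly (map_poly of_int D) a = 0" A degree] \<open>A \<noteq> 0\<close> A
    by blast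
  obtain c q where c: "c \<noteq> 0" and Aq: "smult c A = C * q"
    using pseudo_dvd_by_min_degree_root_poly[OF C min A] .
  obtain d s where d: "d \<noteq> 0" and Bs: "smult d B = C * s"
    using pseudo_dvd_by_min_degree_root_poly[OF C min B] .
  \<comment> \<open>A vanishing polynomial C of least degree pseudo-divides A and B; for degree reasons
    the prime A cannot divide the cofactor of C in A, so it divides C.\<close>
  have prime: "prime_elem A" using irred by (rule irreducible_imp_prime_poly)
  have "A dvd C * q" unfolding Aq[symmetric] by (rule dvd_smult) simp
  moreover have "\<not> A dvd q"
  proof
    assume "A dvd q"
    moreover have "q \<noteq> 0" using Aq c \<open>A \<noteq> 0\<close> by auto
    ultimately have "degree A \<le> degree q" by (rule dvd_imp_degree_le)
    moreover have "degree A = degree C + degree q"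
      using arg_cong[OF Aq, of degree] c C(1) \<open>q \<noteq> 0\<close> by (simp add: degree_mult_eq)
    ultimately show False using nonconst[OF C] by simp
  qed
  ultimately have "A dvd C" using prime by (auto simp: prime_elem_dvd_mult_iff)
  then have "A dvd [:d:] * B" using Bs by simp
  moreover have "\<not> A dvd [:d:]"
    using d nonconst[OF \<open>A \<noteq> 0\<close> A] by (auto dest: dvd_imp_degree_le)
  ultimately show ?thesis using prime prime_elem_dvd_mult_iff by blast
qed

lemma poly_div_power_eq_reflect_poly:
  fixes R :: "'a::field poly"
  assumes "a \<noteq> 0" "degree R < k"
  shows "poly R a / a ^ k = inverse a * poly (monom 1 (k - Suc (degree R)) * reflect_poly R) (inverse a)"
proof -
  obtain e where k: "k = Suc (e + degree R)" using assms(2) less_iff_Suc_add by auto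
  have "poly (reflect_poly R) (inverse a) = inverse a ^ degree R * poly R a"
    using poly_reflect_poly_nz[of "inverse a" R] assms(1) by simp
  then show ?thesis
    by (simp add: k poly_monom power_add divide_inverse power_inverse mult_ac)
qed

lemma Lambda0_iff:
  "x \<in> Lambda0 a \<longleftrightarrow>
     (\<exists>P. x = poly (map_poly of_int P) a) \<and> (\<exists>Q. x = inverse a * poly (map_poly of_int Q) (inverse a))"
  by (auto simp: Lambda0_def int_poly_ring_def)

lemma poly_shift_of_root_in_Lambda0:
  fixes a :: complex
  assumes "a \<noteq> 0" and root: "poly (map_poly of_int P) a = 0"
  shows "poly (map_poly of_int (poly_shift k P)) a \<in> Lambda0 a"
proof (cases "k = 0")
  case True
  have "poly (map_poly of_int (poly_shift k P)) a = inverse a * poly (map_poly of_int 0) (inverse a)"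
    using root True by simp
  then show ?thesis unfolding Lambda0_iff by blast
next
  case False
  define x where "x = poly (map_poly of_int (poly_shift k P)) a"
  define R where "R = - poly_cutoff k P"
  have deg: "degree R < k" using False degree_poly_cutoff_less[of k P] by (simp add: R_def)
  have "map_poly of_int P
      = monom 1 k * map_poly of_int (poly_shift k P) - (map_poly of_int R :: complex poly)"
    using arg_cong[OF monom_poly_shift_plus_poly_cutoff[of k P],
        of "map_poly of_int :: int poly \<Rightarrow> complex poly"]
    by (simp add: R_def map_poly_of_int_simps)
  then have "a ^ k * x - poly (map_poly of_int R) a = 0"
    using root by (simp add: x_def poly_monom)
  then have "x = poly (map_poly of_int R) a / a ^ k" using assms(1) by (simp add: field_simps)
  also have "\<dots>
      = inverse a * poly (map_poly of_int (monom 1 (k - Suc (degree R)) * reflect_poly R)) (inverse a)"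
    using poly_div_power_eq_reflect_poly[OF assms(1)] deg
    by (simp add: map_poly_of_int_simps degree_map_poly)
  finally show ?thesis unfolding Lambda0_iff x_def by blast
qed

lemma Lambda0_imp_poly_shift_of_root:
  fixes a :: complex
  assumes "a \<noteq> 0" "x \<in> Lambda0 a"
  obtains k P where "poly (map_poly of_int P) a = 0" "x = poly (map_poly of_int (poly_shift k P)) a"
proof -
  obtain P Q where xP: "x = poly (map_poly of_int P) a"
    and xQ: "x = inverse a * poly (map_poly of_int Q) (inverse a)"
    using assms(2) unfolding Lambda0_iff by blast
  define k where "k = Suc (degree Q)"
  define R where "R = reflect_poly Q"
  have "poly (map_poly of_int R) a = a ^ degree Q * poly (map_poly of_int Q) (inverse a)"
    using poly_reflect_poly_nz[OF assms(1), of "map_poly of_int Q"]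
    by (simp add: R_def map_poly_of_int_simps degree_map_poly)
  also have "\<dots> = a ^ k * x"
    using xQ assms(1) by (simp add: k_def)
  finally have "poly (map_poly of_int (monom 1 k * P - R)) a = 0"
    using xP by (simp add: map_poly_of_int_simps poly_monom)
  moreover have "poly_shift k (monom 1 k * P - R) = P"
    using degree_reflect_poly_le[of Q]
    by (simp add: R_def k_def poly_shift_diff poly_shift_monom_mult poly_shift_eq_0)
  ultimately show ?thesis using that xP by metis
qed

lemma Lambda0_eq_poly_shifts_of_roots:
  fixes a :: complex
  assumes "a \<noteq> 0"
  shows "Lambda0 a = {poly (map_poly of_int (poly_shift k P)) a | k P. poly (map_poly of_int P) a = 0}"
  using Lambda0_imp_poly_shift_of_root[OF assms] poly_shift_of_root_in_Lambda0[OF assms] by blast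

lemma wgen_eq_poly_shift:
  "i < degree A \<Longrightarrow> wgen A a i = poly (map_poly of_int (poly_shift (degree A - i) A)) a"
proof (induction i)
  case 0
  then show ?case by (simp add: poly_shift_degree map_poly_pCons)
next
  case (Suc i)
  then have "degree A - i = Suc (degree A - Suc i)" by simp
  then have "poly_shift (degree A - Suc i) A
      = pCons (coeff A (degree A - Suc i)) (poly_shift (degree A - i) A)"
    by (subst poly_shift_eq_pCons) simp
  then show ?case using Suc by (simp add: map_poly_pCons)
qed

lemma int_span_wI: "(\<Sum>i<degree A. of_int (c i) * wgen A a i) \<in> int_span_w A a"
  unfolding int_span_w_def by blast

lemma int_span_w_zero: "0 \<in> int_span_w A a"
  using int_span_wI[of "\<lambda>_. 0"] by simp

lemma wgen_in_int_span_w: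
  assumes "i < degree A"
  shows "wgen A a i \<in> int_span_w A a"
proof -
  have "(\<Sum>j<degree A. of_int (if j = i then 1 else 0) * wgen A a j)
        = (\<Sum>j<degree A. if j = i then wgen A a j else 0)"
    by (rule sum.cong) simp_all
  then have eq: "wgen A a i = (\<Sum>j<degree A. of_int (if j = i then 1 else 0) * wgen A a j)"
    using assms by simp
  show ?thesis by (subst eq) (rule int_span_wI)
qed

lemma int_span_w_lincomb:
  assumes "x \<in> int_span_w A a" "y \<in> int_span_w A a"
  shows "of_int m * x + y \<in> int_span_w A a"
proof -
  obtain c d where "x = (\<Sum>i<degree A. of_int (c i) * wgen A a i)"
    "y = (\<Sum>i<degree A. of_int (d i) * wgen A a i)"
    using assms unfolding int_span_w_def by blast
  then have eq: "of_int m * x + y = (\<Sum>i<degree A. of_int (m * c i + d i) * wgen A a i)"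
    by (simp add: sum_distrib_left sum.distrib distrib_right mult.assoc)
  show ?thesis by (subst eq) (rule int_span_wI)
qed

lemma poly_shift_in_int_span_w:
  assumes "k > 0"
  shows "poly (map_poly of_int (poly_shift k A)) a \<in> int_span_w A a"
proof (cases "k \<le> degree A")
  case True
  then show ?thesis
    using assms wgen_eq_poly_shift[of "degree A - k" A a] wgen_in_int_span_w[of "degree A - k" A a]
    by simp
next
  case False
  then show ?thesis using poly_shift_eq_0[of A k] int_span_w_zero by simp
qed

lemma poly_shift_mult_in_int_span_w:
  fixes a :: complex
  assumes root: "poly (map_poly of_int A) a = 0"
  shows "poly (map_poly of_int (poly_shift k (A * S))) a \<in> int_span_w A a"
proof (induction S arbitrary: k)
  case 0
  show ?case using int_span_w_zero by simp
next
  case (pCons c S)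
  show ?case
  proof (cases k)
    case 0
    then show ?thesis
      using root int_span_w_zero by (simp del: mult_pCons_right add: map_poly_of_int_mult)
  next
    case (Suc j)
    then have "poly (map_poly of_int (poly_shift k (A * pCons c S))) a
        = of_int c * poly (map_poly of_int (poly_shift k A)) a
          + poly (map_poly of_int (poly_shift j (A * S))) a"
      by (simp add: poly_shift_add poly_shift_smult poly_shift_Suc_pCons_0 map_poly_of_int_simps)
    then show ?thesis
      using int_span_w_lincomb[OF poly_shift_in_int_span_w pCons.IH] Suc by simp
  qed
qed

lemma int_span_w_eq_poly_shifts_of_multiples:
  fixes a :: complex
  assumes root: "poly (map_poly of_int A) a = 0"
  shows "int_span_w A a = {poly (map_poly of_int (poly_shift k (A * S))) a | k S. True}"
proof
  show "{poly (map_poly of_int (poly_shift k (A * S))) a | k S. True} \<subseteq> int_span_w A a"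
    using poly_shift_mult_in_int_span_w[OF root] by blast
next
  show "int_span_w A a \<subseteq> {poly (map_poly of_int (poly_shift k (A * S))) a | k S. True}"
  proof
    fix x assume "x \<in> int_span_w A a"
    then obtain c where x: "x = (\<Sum>i<degree A. of_int (c i) * wgen A a i)"
      unfolding int_span_w_def by blast
    define S where "S = (\<Sum>i<degree A. monom (c i) i)"
    have "x = (\<Sum>i<degree A. poly (map_poly of_int (poly_shift (degree A) (monom (c i) i * A))) a)"
      unfolding x
      by (rule sum.cong) (simp_all add: wgen_eq_poly_shift poly_shift_monom_mult map_poly_of_int_smult)
    also have "\<dots> = poly (map_poly of_int (poly_shift (degree A) (A * S))) a"
      by (simp add: S_def sum_distrib_left mult.commute poly_shift_sum map_poly_of_int_sum poly_sum)
    finally show "x \<in> {poly (map_poly of_int (poly_shift k (A * S))) a | k S. True}" by blast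
  qed
qed

theorem lemma6p14:
  fixes \<alpha> :: complex and A :: "int poly"
  assumes irred: "irreducible A"
    and prim: "content A = 1"
    and root: "poly (map_poly of_int A) \<alpha> = 0"
    and expanding: "\<And>z::complex. poly (map_poly of_int A) z = 0 \<Longrightarrow> norm z > 1"
  shows "Lambda0 \<alpha> = int_span_w A \<alpha>"
proof -
  \<comment> \<open>Expansion is only needed to exclude \<open>\<alpha> = 0\<close>; primitivity is implied by irreducibility.\<close>
  have "\<alpha> \<noteq> 0" using expanding[OF root] by auto
  then have "Lambda0 \<alpha>
      = {poly (map_poly of_int (poly_shift k P)) \<alpha> | k P. poly (map_poly of_int P) \<alpha> = 0}"
    by (rule Lambda0_eq_poly_shifts_of_roots)
  also have "\<dots> = {poly (map_poly of_int (poly_shift k (A * S))) \<alpha> | k S. True}"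
    using irreducible_dvd_of_common_root[OF irred root] root
    by (fastforce simp: map_poly_of_int_mult elim!: dvdE)
  also have "\<dots> = int_span_w A \<alpha>"
    using int_span_w_eq_poly_shifts_of_multiples[OF root] by simp
  finally show ?thesis .
qed

end
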